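(* Let $\beta>0$, $\beta_a>0$, $\alpha>0$ and $x_a\in[0,1]$, let $\Gamma=[0,x_a]\times[0,1-x_a]$, and consider the planar system \[ \frac{di_a}{dt}=F_a(i_a,i_r)\triangleq \beta(x_a-i_a)(i_a+i_r)-\beta_a(x_a-i_a)i_a-\alpha i_a, \qquad \frac{di_r}{dt}=F_r(i_a,i_r)\triangleq \beta(1-x_a-i_r)(i_a+i_r)-\beta_a(x_a-i_a)i_r-\alpha i_r . \] Let $\lambda_+\triangleq\beta-\beta_a x_a-\alpha$. If $\lambda_+\le 0$, then $(0,0)$ is the only isolated equilibrium of the system in $\Gamma$. Moreover, a unique interior equilibrium (a point of $(0,x_a)\times(0,1-x_a)$ at which $F_a=F_r=0$) exists if and only if $\lambda_+>0$.
   Context: An equilibrium is a point $\boldsymbol{i}\in\Gamma$ with $F_a(\boldsymbol{i})=F_r(\boldsymbol{i})=0$; the point $(0,0)$ is called the infection-free equilibrium. *)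

theory Defs
  imports "HOL-Analysis.Analysis"
begin

definition Fa :: "real \<Rightarrow> real \<Rightarrow> real \<Rightarrow> real \<Rightarrow> real \<Rightarrow> real \<Rightarrow> real" where
  "Fa \<beta> \<beta>a \<alpha> xa ia ir = \<beta> * (xa - ia) * (ia + ir) - \<beta>a * (xa - ia) * ia - \<alpha> * ia"

definition Fr :: "real \<Rightarrow> real \<Rightarrow> real \<Rightarrow> real \<Rightarrow> real \<Rightarrow> real \<Rightarrow> real" where
  "Fr \<beta> \<beta>a \<alpha> xa ia ir = \<beta> * (1 - xa - ir) * (ia + ir) - \<beta>a * (xa - ia) * ir - \<alpha> * ir"

definition Gamma :: "real \<Rightarrow> (real \<times> real) set" where
  "Gamma xa = {0..xa} \<times> {0..1 - xa}"

definition equilibrium :: "real \<Rightarrow> real \<Rightarrow> real \<Rightarrow> real \<Rightarrow> real \<times> real \<Rightarrow> bool" where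
  "equilibrium \<beta> \<beta>a \<alpha> xa p \<longleftrightarrow> p \<in> Gamma xa \<and>
      Fa \<beta> \<beta>a \<alpha> xa (fst p) (snd p) = 0 \<and> Fr \<beta> \<beta>a \<alpha> xa (fst p) (snd p) = 0"

definition isolated_equilibrium :: "real \<Rightarrow> real \<Rightarrow> real \<Rightarrow> real \<Rightarrow> real \<times> real \<Rightarrow> bool" where
  "isolated_equilibrium \<beta> \<beta>a \<alpha> xa p \<longleftrightarrow> equilibrium \<beta> \<beta>a \<alpha> xa p \<and>
      \<not> (p islimpt {q. equilibrium \<beta> \<beta>a \<alpha> xa q})"

definition interior_equilibrium :: "real \<Rightarrow> real \<Rightarrow> real \<Rightarrow> real \<Rightarrow> real \<times> real \<Rightarrow> bool" where
  "interior_equilibrium \<beta> \<beta>a \<alpha> xa p \<longleftrightarrow> p \<in> {0<..<xa} \<times> {0<..<1 - xa} \<and>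
      Fa \<beta> \<beta>a \<alpha> xa (fst p) (snd p) = 0 \<and> Fr \<beta> \<beta>a \<alpha> xa (fst p) (snd p) = 0"

end

theory Submission
  imports Defs
begin

text \<open>Write \<open>s = i\<^sub>a + i\<^sub>r\<close> and \<open>\<lambda> = \<beta> - \<beta>\<^sub>a x\<^sub>a - \<alpha>\<close>. Off the
  origin, \<open>F\<^sub>a + F\<^sub>r = s (\<lambda> + \<beta>\<^sub>a i\<^sub>a - \<beta> s)\<close> forces \<open>\<beta> s = \<lambda> + \<beta>\<^sub>a i\<^sub>a\<close>, and
  then \<open>F\<^sub>a = 0\<close> becomes the linear equation \<open>\<alpha> i\<^sub>a = \<lambda> (x\<^sub>a - i\<^sub>a)\<close>. If
  \<open>\<lambda> \<le> 0\<close> the second equation forces \<open>i\<^sub>a = 0\<close> and then the first gives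
  \<open>s \<le> 0\<close>; if \<open>\<lambda> > 0\<close> their only solution is
  \<open>(\<lambda> x\<^sub>a, \<lambda> (1 - x\<^sub>a)) / (\<lambda> + \<alpha>)\<close>, which lies in the interior of \<open>\<Gamma>\<close>.\<close>

lemma Fa_eq:
  "Fa \<beta> \<beta>a \<alpha> xa ia ir = (xa - ia) * (\<beta> * (ia + ir) - \<beta>a * ia) - \<alpha> * ia"
  by (simp add: Fa_def algebra_simps)

lemma Fa_add_Fr:
  "Fa \<beta> \<beta>a \<alpha> xa ia ir + Fr \<beta> \<beta>a \<alpha> xa ia ir =
     (ia + ir) * ((\<beta> - \<beta>a * xa - \<alpha>) + \<beta>a * ia - \<beta> * (ia + ir))"
  by (simp add: Fa_def Fr_def algebra_simps)

lemma equilibrium_equations_off_origin: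
  assumes "ia + ir \<noteq> 0"
  shows "Fa \<beta> \<beta>a \<alpha> xa ia ir = 0 \<and> Fr \<beta> \<beta>a \<alpha> xa ia ir = 0 \<longleftrightarrow>
           \<beta> * (ia + ir) = (\<beta> - \<beta>a * xa - \<alpha>) + \<beta>a * ia \<and>
           \<alpha> * ia = (\<beta> - \<beta>a * xa - \<alpha>) * (xa - ia)"
proof -
  let ?lam = "\<beta> - \<beta>a * xa - \<alpha>"
  have Fa_on_line: "Fa \<beta> \<beta>a \<alpha> xa ia ir = ?lam * (xa - ia) - \<alpha> * ia"
    if "\<beta> * (ia + ir) = ?lam + \<beta>a * ia"
    unfolding Fa_eq that by (simp add: algebra_simps)
  show ?thesis
  proof
    assume "Fa \<beta> \<beta>a \<alpha> xa ia ir = 0 \<and> Fr \<beta> \<beta>a \<alpha> xa ia ir = 0"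
    moreover from this have "\<beta> * (ia + ir) = ?lam + \<beta>a * ia"
      using Fa_add_Fr[of \<beta> \<beta>a \<alpha> xa ia ir] assms by simp
    ultimately show "\<beta> * (ia + ir) = ?lam + \<beta>a * ia \<and> \<alpha> * ia = ?lam * (xa - ia)"
      using Fa_on_line by simp
  next
    assume "\<beta> * (ia + ir) = ?lam + \<beta>a * ia \<and> \<alpha> * ia = ?lam * (xa - ia)"
    then show "Fa \<beta> \<beta>a \<alpha> xa ia ir = 0 \<and> Fr \<beta> \<beta>a \<alpha> xa ia ir = 0"
      using Fa_on_line Fa_add_Fr[of \<beta> \<beta>a \<alpha> xa ia ir] by simp
  qed
qed

lemma lambda_pos_if_equilibrium_off_origin:
  assumes "\<beta> > 0" "\<alpha> > 0" "0 \<le> ia" "ia \<le> xa" "0 \<le> ir" "(ia, ir) \<noteq> (0, 0)"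
    and "Fa \<beta> \<beta>a \<alpha> xa ia ir = 0" "Fr \<beta> \<beta>a \<alpha> xa ia ir = 0"
  shows "\<beta> - \<beta>a * xa - \<alpha> > 0"
proof (rule ccontr)
  assume "\<not> \<beta> - \<beta>a * xa - \<alpha> > 0"
  have s_pos: "ia + ir > 0"
    using assms(3,5,6) by auto
  then have \<beta>s: "\<beta> * (ia + ir) = (\<beta> - \<beta>a * xa - \<alpha>) + \<beta>a * ia"
    and \<alpha>ia: "\<alpha> * ia = (\<beta> - \<beta>a * xa - \<alpha>) * (xa - ia)"
    using equilibrium_equations_off_origin[of ia ir \<beta> \<beta>a \<alpha> xa] assms(7,8) by simp_all
  have "\<alpha> * ia \<le> 0"
    using \<alpha>ia \<open>\<not> \<beta> - \<beta>a * xa - \<alpha> > 0\<close> assms(4) by (simp add: mult_nonpos_nonneg)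
  then have "ia = 0"
    using assms(2,3) by (simp add: mult_le_0_iff)
  then have "\<beta> * (ia + ir) \<le> 0"
    using \<beta>s \<open>\<not> \<beta> - \<beta>a * xa - \<alpha> > 0\<close> by simp
  then show False
    using s_pos assms(1) by (simp add: mult_le_0_iff)
qed

lemma equilibria_eq_origin:
  assumes "\<beta> > 0" "\<alpha> > 0" "0 \<le> xa" "xa \<le> 1" "\<beta> - \<beta>a * xa - \<alpha> \<le> 0"
  shows "{p. equilibrium \<beta> \<beta>a \<alpha> xa p} = {(0, 0)}"
proof -
  have "p = (0, 0)" if "equilibrium \<beta> \<beta>a \<alpha> xa p" for p
    using that lambda_pos_if_equilibrium_off_origin[OF assms(1,2), of "fst p" xa "snd p" \<beta>a]
      assms(5) by (cases p) (auto simp: equilibrium_def Gamma_def)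
  moreover have "equilibrium \<beta> \<beta>a \<alpha> xa (0, 0)"
    using assms(3,4) by (simp add: equilibrium_def Gamma_def Fa_def Fr_def)
  ultimately show ?thesis
    by blast
qed

lemma equilibrium_equations_solution:
  fixes \<beta> \<beta>a \<alpha> xa ia ir :: real
  assumes "\<beta> > 0" "\<beta> - \<beta>a * xa > 0"
  shows "\<beta> * (ia + ir) = (\<beta> - \<beta>a * xa - \<alpha>) + \<beta>a * ia \<and>
           \<alpha> * ia = (\<beta> - \<beta>a * xa - \<alpha>) * (xa - ia) \<longleftrightarrow>
         ia = (\<beta> - \<beta>a * xa - \<alpha>) * xa / (\<beta> - \<beta>a * xa) \<and>
           ir = (\<beta> - \<beta>a * xa - \<alpha>) * (1 - xa) / (\<beta> - \<beta>a * xa)"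
proof -
  define lam where "lam = \<beta> - \<beta>a * xa - \<alpha>"
  have L: "\<beta> - \<beta>a * xa = lam + \<alpha>" "lam + \<alpha> > 0" "\<beta> = lam + \<alpha> + \<beta>a * xa"
    using assms(2) by (auto simp: lam_def)
  have ia_iff: "\<alpha> * ia = lam * (xa - ia) \<longleftrightarrow> ia = lam * xa / (lam + \<alpha>)"
    using L(2) by (auto simp: field_simps)
  have ir_iff: "\<beta> * (ia + ir) = lam + \<beta>a * ia \<longleftrightarrow> ir = lam * (1 - xa) / (lam + \<alpha>)"
    if ia: "ia = lam * xa / (lam + \<alpha>)"
  proof -
    have "\<beta> * (lam / (lam + \<alpha>)) = lam + \<beta>a * ia"
      using ia L(2,3) by (simp add: field_simps)
    then have "\<beta> * (ia + ir) = lam + \<beta>a * ia \<longleftrightarrow> ia + ir = lam / (lam + \<alpha>)"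
      using assms(1) by (metis mult_cancel_left less_irrefl)
    also have "\<dots> \<longleftrightarrow> ir = lam * (1 - xa) / (lam + \<alpha>)"
      using ia L(2) by (auto simp: field_simps)
    finally show ?thesis .
  qed
  show ?thesis
    unfolding lam_def[symmetric] unfolding L(1) using ia_iff ir_iff by blast
qed

lemma interior_equilibrium_iff:
  assumes "\<beta> > 0" "\<alpha> > 0" "0 < xa" "xa < 1" "\<beta> - \<beta>a * xa - \<alpha> > 0"
  shows "interior_equilibrium \<beta> \<beta>a \<alpha> xa p \<longleftrightarrow>
           p = ((\<beta> - \<beta>a * xa - \<alpha>) * xa / (\<beta> - \<beta>a * xa),
                (\<beta> - \<beta>a * xa - \<alpha>) * (1 - xa) / (\<beta> - \<beta>a * xa))"
    (is "_ \<longleftrightarrow> p = (?ia, ?ir)")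
proof -
  obtain ia ir where p: "p = (ia, ir)"
    by (cases p)
  have bounds: "?ia \<in> {0<..<xa}" "?ir \<in> {0<..<1 - xa}"
  proof -
    define lam where "lam = \<beta> - \<beta>a * xa - \<alpha>"
    have "lam > 0" "\<beta> - \<beta>a * xa = lam + \<alpha>"
      using assms(5) by (simp_all add: lam_def)
    then show "?ia \<in> {0<..<xa}" "?ir \<in> {0<..<1 - xa}"
      using assms(2-4) unfolding lam_def[symmetric] by (simp_all add: field_simps)
  qed
  have equations_iff: "Fa \<beta> \<beta>a \<alpha> xa ia ir = 0 \<and> Fr \<beta> \<beta>a \<alpha> xa ia ir = 0 \<longleftrightarrow> (ia, ir) = (?ia, ?ir)"
    if "ia + ir \<noteq> 0"
    using equilibrium_equations_off_origin[OF that, of \<beta> \<beta>a \<alpha> xa]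
      equilibrium_equations_solution[OF assms(1), of \<beta>a xa ia ir \<alpha>] assms(2,5)
    by simp
  show ?thesis
  proof
    assume "interior_equilibrium \<beta> \<beta>a \<alpha> xa p"
    then show "p = (?ia, ?ir)"
      using equations_iff unfolding p interior_equilibrium_def by simp
  next
    assume "p = (?ia, ?ir)"
    then show "interior_equilibrium \<beta> \<beta>a \<alpha> xa p"
      using equations_iff bounds unfolding p interior_equilibrium_def by simp
  qed
qed

theorem lemma3:
  fixes \<beta> \<beta>a \<alpha> xa :: real
  assumes "\<beta> > 0" and "\<beta>a > 0" and "\<alpha> > 0" and "0 \<le> xa" and "xa \<le> 1"
  shows "(\<beta> - \<beta>a * xa - \<alpha> \<le> 0 \<longrightarrow>
            isolated_equilibrium \<beta> \<beta>a \<alpha> xa (0, 0) \<and>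
            (\<forall>p. isolated_equilibrium \<beta> \<beta>a \<alpha> xa p \<longrightarrow> p = (0, 0)))
       \<and> (0 < xa \<and> xa < 1 \<longrightarrow>
            ((\<exists>!p. interior_equilibrium \<beta> \<beta>a \<alpha> xa p) \<longleftrightarrow> \<beta> - \<beta>a * xa - \<alpha> > 0))"
proof (intro conjI impI)
  assume "\<beta> - \<beta>a * xa - \<alpha> \<le> 0"
  then have E: "{p. equilibrium \<beta> \<beta>a \<alpha> xa p} = {(0, 0)}"
    using equilibria_eq_origin assms by blast
  then show "isolated_equilibrium \<beta> \<beta>a \<alpha> xa (0, 0)"
    by (auto simp: isolated_equilibrium_def islimpt_insert)
  show "\<forall>p. isolated_equilibrium \<beta> \<beta>a \<alpha> xa p \<longrightarrow> p = (0, 0)"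
    using E by (auto simp: isolated_equilibrium_def)
next
  assume xa: "0 < xa \<and> xa < 1"
  show "(\<exists>!p. interior_equilibrium \<beta> \<beta>a \<alpha> xa p) \<longleftrightarrow> \<beta> - \<beta>a * xa - \<alpha> > 0"
  proof
    assume "\<exists>!p. interior_equilibrium \<beta> \<beta>a \<alpha> xa p"
    then obtain ia ir where "interior_equilibrium \<beta> \<beta>a \<alpha> xa (ia, ir)"
      by auto
    then show "\<beta> - \<beta>a * xa - \<alpha> > 0"
      using lambda_pos_if_equilibrium_off_origin[OF assms(1,3), of ia xa ir \<beta>a]
      by (auto simp: interior_equilibrium_def)
  next
    assume "\<beta> - \<beta>a * xa - \<alpha> > 0"
    then show "\<exists>!p. interior_equilibrium \<beta> \<beta>a \<alpha> xa p"
      using interior_equilibrium_iff[OF assms(1,3)] xa by simp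
  qed
qed

end
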